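(* Let $C$ be a closed normal cone with nonempty interior in a real Banach space $(X,\|\cdot\|)$. Fix $u\in\operatorname{int}C$ and let $\|\cdot\|_u$ be the order-unit norm. If $f:\operatorname{int}C\to C$ is order-preserving and homogeneous, then $$r(f)=\lim_{k\to\infty}\|(f+\operatorname{id})^k(u)\|_u^{1/k}-1=\inf_{k>0}\|(f+\operatorname{id})^k(u)\|_u^{1/k}-1=\lim_{k\to\infty}\|(f+\operatorname{id})^k(u)\|^{1/k}-1.$$ In particular, $r(f)<1$ if and only if there is $k\in\mathbb{N}$ with $(f+\operatorname{id})^k(u)\ll 2^ku$.
   Context: A closed cone $C$ (closed convex, $\lambda C\subseteq C$ for $\lambda\ge0$, $C\cap(-C)=\{0\}$) induces the order $x\le y$ iff $y-x\in C$; $x\ll y$ means $y-x\in\operatorname{int}C$. $C$ is normal if there is $\kappa$ with $\|x\|\le\kappa\|y\|$ whenever $0\le x\le y$. The order-unit norm is $\|x\|_u=\inf\{k>0: -ku\le x\le ku\}$ (on $X_u=\bigcup_{k>0}[-ku,ku]$, which equals $X$ when $u\in\operatorname{int}C$). $f$ is order-preserving if $x\le y\Rightarrow f(x)\le f(y)$; homogeneous if $f(tx)=tf(x)$ for $t>0$. $r(f)=\inf_{x\in\operatorname{int}C}M(f(x)/x)$ with $M(x/y)=\inf\{\beta>0:x\le\beta y\}$. *)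

theory Defs
  imports "HOL-Analysis.Analysis"
begin

definition closed_cone :: "'a::real_normed_vector set \<Rightarrow> bool" where
  "closed_cone C \<longleftrightarrow> closed C \<and> convex C \<and> C \<noteq> {} \<and>
     (\<forall>x\<in>C. \<forall>t::real. t \<ge> 0 \<longrightarrow> t *\<^sub>R x \<in> C) \<and>
     (\<forall>x. x \<in> C \<and> - x \<in> C \<longrightarrow> x = 0)"

definition cle :: "'a::real_normed_vector set \<Rightarrow> 'a \<Rightarrow> 'a \<Rightarrow> bool" where
  "cle C x y \<longleftrightarrow> y - x \<in> C"

definition cll :: "'a::real_normed_vector set \<Rightarrow> 'a \<Rightarrow> 'a \<Rightarrow> bool" where
  "cll C x y \<longleftrightarrow> y - x \<in> interior C"

definition normal_cone :: "'a::real_normed_vector set \<Rightarrow> bool" where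
  "normal_cone C \<longleftrightarrow> (\<exists>\<kappa>. \<forall>x y. cle C 0 x \<and> cle C x y \<longrightarrow> norm x \<le> \<kappa> * norm y)"

definition unorm :: "'a::real_normed_vector set \<Rightarrow> 'a \<Rightarrow> 'a \<Rightarrow> real" where
  "unorm C u x = Inf {k. k > 0 \<and> cle C (- (k *\<^sub>R u)) x \<and> cle C x (k *\<^sub>R u)}"

definition Mx :: "'a::real_normed_vector set \<Rightarrow> 'a \<Rightarrow> 'a \<Rightarrow> real" where
  "Mx C x y = Inf {\<beta>. \<beta> > 0 \<and> cle C x (\<beta> *\<^sub>R y)}"

definition order_preserving_on :: "'a::real_normed_vector set \<Rightarrow> 'a set \<Rightarrow> ('a \<Rightarrow> 'a) \<Rightarrow> bool" where
  "order_preserving_on C D f \<longleftrightarrow> (\<forall>x\<in>D. \<forall>y\<in>D. cle C x y \<longrightarrow> cle C (f x) (f y))"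

definition homogeneous_on :: "'a::real_normed_vector set \<Rightarrow> ('a \<Rightarrow> 'a) \<Rightarrow> bool" where
  "homogeneous_on D f \<longleftrightarrow> (\<forall>x\<in>D. \<forall>t::real. t > 0 \<longrightarrow> f (t *\<^sub>R x) = t *\<^sub>R f x)"

definition cone_spectral_radius :: "'a::real_normed_vector set \<Rightarrow> ('a \<Rightarrow> 'a) \<Rightarrow> real" where
  "cone_spectral_radius C f = Inf ((\<lambda>x. Mx C (f x) x) ` interior C)"

end

theory Submission
  imports Defs
begin

text \<open>
  Write \<open>g = f + id\<close>. The upper bound on \<open>r(f)\<close> comes from iterating a damped map: if
  \<open>g\<^sup>K u \<preceq> t u\<close> with \<open>t < \<beta>\<^sup>K\<close>, the orbit \<open>x\<^sub>0 = u\<close>, \<open>x\<^sub>n\<^sub>+\<^sub>1 = u + g(x\<^sub>n) / \<beta>\<close> stays below a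
  multiple of \<open>u\<close>, which forces the ratios \<open>M(x\<^sub>n\<^sub>+\<^sub>1 / x\<^sub>n)\<close> to converge to \<open>1\<close> geometrically; since
  \<open>f(x\<^sub>n) = \<beta> x\<^sub>n\<^sub>+\<^sub>1 - \<beta> u - x\<^sub>n\<close>, the \<open>x\<^sub>n\<close> are almost subeigenvectors of \<open>f\<close> for \<open>\<beta> - 1\<close>.
  Hence \<open>r(f) + 1 \<le> \<parallel>g\<^sup>k u\<parallel>\<^sub>u\<^sup>1\<^sup>/\<^sup>k\<close> for every \<open>k\<close>. Conversely a subeigenvector \<open>f x \<preceq> \<gamma> x\<close>
  gives \<open>\<parallel>g\<^sup>k u\<parallel>\<^sub>u = O((\<gamma> + 1)\<^sup>k)\<close>. Normality makes \<open>\<parallel>\<cdot>\<parallel>\<^sub>u\<close> and \<open>\<parallel>\<cdot>\<parallel>\<close> equivalent on \<open>C\<close>.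
\<close>

lemma power_powr_inverse: "x > 0 \<Longrightarrow> k > 0 \<Longrightarrow> (x powr (1 / real k)) ^ k = x"
  for x :: real
  by (simp add: powr_power)

lemma powr_inverse_power: "x > 0 \<Longrightarrow> k > 0 \<Longrightarrow> (x ^ k) powr (1 / real k) = x"
  for x :: real
  by (simp add: powr_realpow[symmetric] powr_powr)

lemma tendsto_const_powr_inverse: "c > 0 \<Longrightarrow> (\<lambda>k. c powr (1 / real k)) \<longlonglongrightarrow> 1"
  for c :: real
  using tendsto_powr[OF tendsto_const lim_1_over_n, of c] by simp

lemma tendsto_powr_inverse_comparable:
  fixes a b :: "nat \<Rightarrow> real"
  assumes lim: "(\<lambda>k. a k powr (1 / real k)) \<longlonglongrightarrow> L"
    and "\<delta> > 0" "K > 0" "\<And>k. a k \<ge> 0"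
    and bounds: "\<And>k. \<delta> * a k \<le> b k" "\<And>k. b k \<le> K * a k"
  shows "(\<lambda>k. b k powr (1 / real k)) \<longlonglongrightarrow> L"
proof (rule real_tendsto_sandwich)
  have scaled: "(\<lambda>k. (c * a k) powr (1 / real k)) \<longlonglongrightarrow> L" if "c > 0" for c
    using tendsto_mult[OF tendsto_const_powr_inverse[OF that] lim] that assms(4)
    by (simp add: powr_mult)
  show "(\<lambda>k. (\<delta> * a k) powr (1 / real k)) \<longlonglongrightarrow> L" "(\<lambda>k. (K * a k) powr (1 / real k)) \<longlonglongrightarrow> L"
    using scaled assms(2,3) by auto
  have "b k \<ge> 0" for k
    using bounds(1)[of k] assms(2,4) by (meson mult_nonneg_nonneg order.trans less_imp_le)
  with assms(2,4) bounds
  show "eventually (\<lambda>k. (\<delta> * a k) powr (1 / real k) \<le> b k powr (1 / real k)) sequentially"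
    "eventually (\<lambda>k. b k powr (1 / real k) \<le> (K * a k) powr (1 / real k)) sequentially"
    by (auto intro!: always_eventually powr_mono2)
qed

section \<open>Cones and the order-unit norm\<close>

locale cone_order =
  fixes C :: "'a::real_normed_vector set"
  assumes closed_cone: "closed_cone C"
begin

abbreviation le_C (infix "\<preceq>" 50) where "x \<preceq> y \<equiv> cle C x y"

lemma scaleR_mem: "x \<in> C \<Longrightarrow> t \<ge> 0 \<Longrightarrow> t *\<^sub>R x \<in> C"
  using closed_cone unfolding closed_cone_def by blast

lemma zero_mem: "0 \<in> C"
  using closed_cone scaleR_mem[of _ 0] unfolding closed_cone_def by fastforce

lemma add_mem:
  assumes "x \<in> C" "y \<in> C"
  shows "x + y \<in> C"
proof -
  have "(1/2::real) *\<^sub>R x + (1 - 1/2::real) *\<^sub>R y \<in> C"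
    using closed_cone assms unfolding closed_cone_def convex_def by simp
  from scaleR_mem[OF this, of 2] show ?thesis
    by (simp add: scaleR_add_right)
qed

lemma pointed: "x \<in> C \<Longrightarrow> - x \<in> C \<Longrightarrow> x = 0"
  using closed_cone unfolding closed_cone_def by blast

lemma interior_add_mem:
  assumes x: "x \<in> interior C" and y: "y \<in> C"
  shows "x + y \<in> interior C"
proof -
  obtain e where e: "e > 0" "ball x e \<subseteq> C"
    using x by (meson mem_interior)
  have "z \<in> C" if "z \<in> ball (x + y) e" for z
  proof -
    have "z - y \<in> ball x e"
      using that by (simp add: dist_norm algebra_simps)
    with e add_mem[OF _ y] show ?thesis
      by (metis diff_add_cancel subsetD)
  qed
  with e show ?thesis by (meson mem_interior subsetI)
qed

lemma interior_scaleR_mem: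
  assumes x: "x \<in> interior C" and t: "t > 0"
  shows "t *\<^sub>R x \<in> interior C"
proof -
  obtain e where e: "e > 0" "ball x e \<subseteq> C"
    using x by (meson mem_interior)
  have "z \<in> C" if "z \<in> ball (t *\<^sub>R x) (t * e)" for z
  proof -
    have "t *\<^sub>R x - z = t *\<^sub>R (x - (1/t) *\<^sub>R z)"
      using t by (simp add: algebra_simps)
    with that t have "(1/t) *\<^sub>R z \<in> ball x e"
      by (simp add: dist_norm)
    with e scaleR_mem[of "(1/t) *\<^sub>R z" t] t show ?thesis
      by auto
  qed
  with e t show ?thesis by (meson mem_interior mult_pos_pos subsetI)
qed

lemma interior_absorbing:
  assumes x: "x \<in> interior C"
  shows "\<exists>\<beta>>0. y \<preceq> \<beta> *\<^sub>R x"
proof (cases "y = 0")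
  case True
  with x show ?thesis
    by (intro exI[of _ 1]) (auto simp: cle_def dest: interior_subset[THEN subsetD])
next
  case False
  obtain e where e: "e > 0" "ball x e \<subseteq> C"
    using x by (meson mem_interior)
  define s where "s = e / (2 * norm y)"
  have s: "s > 0" "norm (s *\<^sub>R y) < e"
    using e False by (simp_all add: s_def)
  then have "x - s *\<^sub>R y \<in> C"
    using e by (auto simp: dist_norm)
  from scaleR_mem[OF this, of "1/s"] s have "(1/s) *\<^sub>R x - y \<in> C"
    by (simp add: algebra_simps)
  with s show ?thesis by (intro exI[of _ "1/s"]) (auto simp: cle_def)
qed

lemma cle_refl: "x \<preceq> x"
  by (simp add: cle_def zero_mem)

lemma cle_trans [trans]: "x \<preceq> y \<Longrightarrow> y \<preceq> z \<Longrightarrow> x \<preceq> z"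
  unfolding cle_def by (metis add_mem add.commute diff_add_cancel diff_add_eq)

lemma cle_add: "x \<preceq> y \<Longrightarrow> a \<preceq> b \<Longrightarrow> x + a \<preceq> y + b"
  unfolding cle_def by (metis add_diff_add add_mem)

lemma cle_add_left: "x \<preceq> y \<Longrightarrow> z + x \<preceq> z + y"
  by (simp add: cle_def)

lemma cle_scaleR: "x \<preceq> y \<Longrightarrow> t \<ge> 0 \<Longrightarrow> t *\<^sub>R x \<preceq> t *\<^sub>R y"
  unfolding cle_def by (metis scaleR_diff_right scaleR_mem)

lemma cle_scaleR_left: "x \<in> C \<Longrightarrow> s \<le> t \<Longrightarrow> s *\<^sub>R x \<preceq> t *\<^sub>R x"
  unfolding cle_def by (metis diff_ge_0_iff_ge scaleR_diff_left scaleR_mem)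

lemma Mx_le: "\<gamma> > 0 \<Longrightarrow> x \<preceq> \<gamma> *\<^sub>R y \<Longrightarrow> Mx C x y \<le> \<gamma>"
  unfolding Mx_def by (rule cInf_lower) (auto intro: bdd_belowI[of _ 0])

lemma Mx_nonneg: "y \<in> interior C \<Longrightarrow> Mx C x y \<ge> 0"
  unfolding Mx_def using interior_absorbing[of y x] by (intro cInf_greatest) auto

end

locale order_unit = cone_order +
  fixes u :: 'a
  assumes nontrivial: "(UNIV :: 'a set) \<noteq> {0}"
    and unit_interior: "u \<in> interior C"
begin

lemma unit_mem: "u \<in> C"
  using unit_interior interior_subset by blast

lemma zero_notin_interior: "0 \<notin> interior C"
proof
  assume "0 \<in> interior C"
  then obtain e where e: "e > 0" "ball 0 e \<subseteq> C"
    by (meson mem_interior)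
  obtain z :: 'a where z: "z \<noteq> 0"
    using nontrivial by auto
  define w where "w = (e / (2 * norm z)) *\<^sub>R z"
  have "norm w = e / 2"
    using z e by (simp add: w_def)
  with e have "w \<in> C" "- w \<in> C"
    by auto
  then have "w = 0" by (rule pointed)
  with z e show False by (simp add: w_def)
qed

lemma unit_nonzero: "u \<noteq> 0"
  using unit_interior zero_notin_interior by auto

lemma interior_unit_margin:
  assumes x: "x \<in> interior C"
  shows "\<exists>\<epsilon>>0. \<epsilon> < 1 \<and> \<epsilon> *\<^sub>R u \<preceq> x"
proof -
  obtain e where e: "e > 0" "ball x e \<subseteq> C"
    using x by (meson mem_interior)
  define s where "s = min (1/2) (e / (2 * norm u))"
  have s: "s > 0" "s < 1"
    using e unit_nonzero by (auto simp: s_def)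
  have "norm (s *\<^sub>R u) = s * norm u"
    using s by simp
  also have "\<dots> \<le> (e / (2 * norm u)) * norm u"
    by (rule mult_right_mono) (auto simp: s_def)
  also have "\<dots> < e"
    using e unit_nonzero by simp
  finally have "x - s *\<^sub>R u \<in> C"
    using e by (auto simp: dist_norm)
  with s show ?thesis by (auto simp: cle_def)
qed

lemma unorm_set_nonempty:
  assumes "y \<in> C"
  shows "{k. k > 0 \<and> - (k *\<^sub>R u) \<preceq> y \<and> y \<preceq> k *\<^sub>R u} \<noteq> {}"
proof -
  obtain b where b: "b > 0" "y \<preceq> b *\<^sub>R u"
    using interior_absorbing[OF unit_interior] by blast
  have "y - - (b *\<^sub>R u) \<in> C"
    using add_mem[OF assms scaleR_mem[OF unit_mem, of b]] b by simp
  with b show ?thesis by (auto simp: cle_def)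
qed

lemma unorm_nonneg: "y \<in> C \<Longrightarrow> unorm C u y \<ge> 0"
  unfolding unorm_def by (rule cInf_greatest[OF unorm_set_nonempty]) auto

lemma unorm_le:
  assumes "y \<in> C" "t > 0" "y \<preceq> t *\<^sub>R u"
  shows "unorm C u y \<le> t"
proof -
  have "- (t *\<^sub>R u) \<preceq> y"
    using add_mem[OF assms(1) scaleR_mem[OF unit_mem, of t]] assms(2) by (simp add: cle_def)
  with assms show ?thesis
    unfolding unorm_def by (intro cInf_lower) (auto intro: bdd_belowI[of _ 0])
qed

lemma cle_of_unorm_less:
  assumes "y \<in> C" "unorm C u y < t"
  shows "y \<preceq> t *\<^sub>R u"
proof -
  obtain k where k: "k > 0" "y \<preceq> k *\<^sub>R u" "k < t"
    using cInf_lessD[OF unorm_set_nonempty[OF assms(1)]] assms(2) unfolding unorm_def by blast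
  then have "k *\<^sub>R u \<preceq> t *\<^sub>R u"
    by (intro cle_scaleR_left unit_mem) simp
  with k show ?thesis by (blast intro: cle_trans)
qed

lemma unorm_ge_one:
  assumes "y \<in> C" "u \<preceq> y"
  shows "unorm C u y \<ge> 1"
proof (rule ccontr)
  define t where "t = (unorm C u y + 1) / 2"
  assume "\<not> ?thesis"
  then have t: "unorm C u y < t" "t < 1"
    by (auto simp: t_def)
  with assms have "u \<preceq> t *\<^sub>R u"
    using cle_of_unorm_less cle_trans by blast
  then have "(1 - t) *\<^sub>R (- u) \<in> C"
    by (simp add: cle_def algebra_simps)
  from scaleR_mem[OF this, of "1 / (1 - t)"] t have "- u \<in> C"
    by simp
  with unit_mem unit_nonzero pointed show False by blast
qed

lemma unorm_norm_equivalent: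
  assumes "normal_cone C"
  obtains \<delta> K where "\<delta> > 0" "K > 0"
    "\<And>y. y \<in> C \<Longrightarrow> \<delta> * unorm C u y \<le> norm y"
    "\<And>y. y \<in> C \<Longrightarrow> norm y \<le> K * unorm C u y"
proof -
  obtain \<kappa> where \<kappa>: "\<And>x z. 0 \<preceq> x \<Longrightarrow> x \<preceq> z \<Longrightarrow> norm x \<le> \<kappa> * norm z"
    using assms unfolding normal_cone_def by blast
  have "norm u \<le> \<kappa> * norm u"
    using \<kappa>[of u u] unit_mem zero_mem by (simp add: cle_def)
  then have K: "\<kappa> * norm u > 0"
    using unit_nonzero by (simp add: mult_le_cancel_right1)
  obtain e where e: "e > 0" "ball u e \<subseteq> C"
    using unit_interior by (meson mem_interior)
  have lower: "e / 2 * unorm C u y \<le> norm y" if y: "y \<in> C" for y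
  proof (cases "y = 0")
    case True
    have "unorm C u 0 \<le> \<epsilon>" if "\<epsilon> > 0" for \<epsilon>
      using that unit_mem by (intro unorm_le zero_mem) (auto simp: cle_def intro: scaleR_mem)
    then have "unorm C u 0 \<le> 0"
      by (meson dense_ge)
    with True e show ?thesis by (simp add: mult_nonneg_nonpos)
  next
    case False
    define s where "s = e / (2 * norm y)"
    have s: "s > 0" "norm (s *\<^sub>R y) < e"
      using e False by (simp_all add: s_def)
    then have "u - s *\<^sub>R y \<in> C"
      using e by (auto simp: dist_norm)
    from scaleR_mem[OF this, of "1/s"] s have "y \<preceq> (1/s) *\<^sub>R u"
      by (simp add: cle_def algebra_simps)
    with s y have "unorm C u y \<le> 1/s"
      by (intro unorm_le) auto
    with s False show ?thesis
      by (simp add: s_def field_simps)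
  qed
  have upper: "norm y \<le> \<kappa> * norm u * unorm C u y" if y: "y \<in> C" for y
  proof (rule field_le_epsilon)
    fix \<epsilon> :: real assume "\<epsilon> > 0"
    define t where "t = unorm C u y + \<epsilon> / (\<kappa> * norm u)"
    have t: "unorm C u y < t" "t > 0"
      using \<open>\<epsilon> > 0\<close> K unorm_nonneg[OF y] by (auto simp: t_def intro: add_nonneg_pos)
    then have "norm y \<le> \<kappa> * norm (t *\<^sub>R u)"
      using y cle_of_unorm_less[OF y] by (intro \<kappa>) (auto simp: cle_def)
    also have "\<dots> = \<kappa> * norm u * t"
      using t by simp
    also have "\<dots> = \<kappa> * norm u * unorm C u y + \<epsilon>"
      using K unit_nonzero by (auto simp: t_def field_simps)
    finally show "norm y \<le> \<kappa> * norm u * unorm C u y + \<epsilon>" .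
  qed
  from e K lower upper show ?thesis
    by (intro that[of "e / 2" "\<kappa> * norm u"]) auto
qed

end

section \<open>Order-preserving homogeneous maps\<close>

locale cone_map = order_unit +
  fixes f :: "'a \<Rightarrow> 'a"
  assumes maps_into: "\<forall>x\<in>interior C. f x \<in> C"
    and order_preserving: "order_preserving_on C (interior C) f"
    and homogeneous: "homogeneous_on (interior C) f"
begin

abbreviation g :: "'a \<Rightarrow> 'a" where "g \<equiv> \<lambda>x. f x + x"

abbreviation r :: real where "r \<equiv> cone_spectral_radius C f"

abbreviation unorm_iter :: "nat \<Rightarrow> real" where
  "unorm_iter k \<equiv> unorm C u ((g ^^ k) u)"

lemma g_interior: "x \<in> interior C \<Longrightarrow> g x \<in> interior C"
  using maps_into interior_add_mem by (metis add.commute)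

lemma g_mem: "x \<in> interior C \<Longrightarrow> g x \<in> C"
  using g_interior interior_subset by blast

lemma g_iter_interior: "x \<in> interior C \<Longrightarrow> (g ^^ k) x \<in> interior C"
  by (induction k) (auto intro: g_interior)

lemma g_iter_mem: "x \<in> interior C \<Longrightarrow> (g ^^ k) x \<in> C"
  using g_iter_interior interior_subset by blast

lemma g_mono: "x \<in> interior C \<Longrightarrow> y \<in> interior C \<Longrightarrow> x \<preceq> y \<Longrightarrow> g x \<preceq> g y"
  using order_preserving unfolding order_preserving_on_def by (blast intro: cle_add)

lemma g_iter_mono:
  "x \<in> interior C \<Longrightarrow> y \<in> interior C \<Longrightarrow> x \<preceq> y \<Longrightarrow> (g ^^ k) x \<preceq> (g ^^ k) y"
  by (induction k) (auto intro: g_mono g_iter_interior)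

lemma g_scaleR: "x \<in> interior C \<Longrightarrow> t > 0 \<Longrightarrow> g (t *\<^sub>R x) = t *\<^sub>R g x"
  using homogeneous unfolding homogeneous_on_def by (simp add: scaleR_add_right)

lemma g_iter_scaleR: "x \<in> interior C \<Longrightarrow> t > 0 \<Longrightarrow> (g ^^ k) (t *\<^sub>R x) = t *\<^sub>R (g ^^ k) x"
  by (induction k) (auto simp: g_scaleR g_iter_interior)

lemma g_iter_ge: "x \<in> interior C \<Longrightarrow> x \<preceq> (g ^^ k) x"
proof (induction k)
  case 0
  show ?case by (simp add: cle_refl)
next
  case (Suc k)
  have "(g ^^ k) x \<preceq> g ((g ^^ k) x)"
    using maps_into g_iter_interior[OF Suc.prems] by (simp add: cle_def)
  with Suc show ?case by (auto intro: cle_trans)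
qed

lemma spectral_radius_le:
  assumes "x \<in> interior C" "\<gamma> > 0" "f x \<preceq> \<gamma> *\<^sub>R x"
  shows "r \<le> \<gamma>"
proof -
  have "r \<le> Mx C (f x) x"
    unfolding cone_spectral_radius_def using assms(1) Mx_nonneg
    by (intro cInf_lower) (auto intro: bdd_belowI[of _ 0])
  also have "\<dots> \<le> \<gamma>"
    using assms(2,3) by (rule Mx_le)
  finally show ?thesis .
qed

lemma spectral_radius_approx:
  assumes "\<epsilon> > 0"
  obtains x \<gamma> where "x \<in> interior C" "\<gamma> > 0" "\<gamma> < r + \<epsilon>" "f x \<preceq> \<gamma> *\<^sub>R x"
proof -
  obtain x where x: "x \<in> interior C" "Mx C (f x) x < r + \<epsilon>"
    using cInf_lessD[of "(\<lambda>x. Mx C (f x) x) ` interior C" "r + \<epsilon>"] unit_interior assms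
    unfolding cone_spectral_radius_def by auto
  moreover obtain \<beta> where "\<beta> > 0" "f x \<preceq> \<beta> *\<^sub>R x"
    using interior_absorbing[OF x(1)] by blast
  ultimately obtain \<gamma> where "\<gamma> > 0" "f x \<preceq> \<gamma> *\<^sub>R x" "\<gamma> < r + \<epsilon>"
    using cInf_lessD[of "{\<beta>. \<beta> > 0 \<and> f x \<preceq> \<beta> *\<^sub>R x}" "r + \<epsilon>"] unfolding Mx_def by blast
  with x show ?thesis using that by blast
qed

lemma unorm_iter_le_of_subeigenvector:
  assumes x: "x \<in> interior C" and \<gamma>: "\<gamma> > 0" and sub: "f x \<preceq> \<gamma> *\<^sub>R x"
  obtains D where "D > 0" "\<And>k. unorm_iter k \<le> D * (\<gamma> + 1) ^ k"
proof -
  obtain s where s: "s > 0" "u \<preceq> s *\<^sub>R x"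
    using interior_absorbing[OF x] by blast
  obtain t where t: "t > 0" "x \<preceq> t *\<^sub>R u"
    using interior_absorbing[OF unit_interior] by blast
  have iter_x: "(g ^^ k) x \<preceq> (\<gamma> + 1) ^ k *\<^sub>R x" for k
  proof (induction k)
    case 0
    show ?case by (simp add: cle_refl)
  next
    case (Suc k)
    have "g ((g ^^ k) x) \<preceq> g ((\<gamma> + 1) ^ k *\<^sub>R x)"
      using Suc g_iter_interior[OF x] interior_scaleR_mem[OF x] \<gamma> by (intro g_mono) auto
    also have "\<dots> = (\<gamma> + 1) ^ k *\<^sub>R g x"
      using g_scaleR[OF x] \<gamma> by simp
    also have "\<dots> \<preceq> (\<gamma> + 1) ^ k *\<^sub>R ((\<gamma> + 1) *\<^sub>R x)"
      using sub \<gamma> by (intro cle_scaleR) (auto simp: cle_def algebra_simps)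
    finally show ?case
      by (simp add: mult.commute)
  qed
  have "unorm_iter k \<le> s * t * (\<gamma> + 1) ^ k" for k
  proof (rule unorm_le[OF g_iter_mem[OF unit_interior]])
    have "(g ^^ k) u \<preceq> (g ^^ k) (s *\<^sub>R x)"
      using s unit_interior interior_scaleR_mem[OF x] by (intro g_iter_mono) auto
    also have "\<dots> = s *\<^sub>R (g ^^ k) x"
      using g_iter_scaleR[OF x s(1)] .
    also have "\<dots> \<preceq> s *\<^sub>R ((\<gamma> + 1) ^ k *\<^sub>R x)"
      using iter_x s by (intro cle_scaleR) auto
    also have "\<dots> \<preceq> s *\<^sub>R ((\<gamma> + 1) ^ k *\<^sub>R (t *\<^sub>R u))"
      using t s \<gamma> by (intro cle_scaleR) auto
    finally show "(g ^^ k) u \<preceq> (s * t * (\<gamma> + 1) ^ k) *\<^sub>R u"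
      by (simp add: mult_ac)
    show "s * t * (\<gamma> + 1) ^ k > 0"
      using s t \<gamma> by simp
  qed
  with s t show ?thesis using that[of "s * t"] by simp
qed

end

section \<open>The damped iteration\<close>

locale damped_orbit = cone_map +
  fixes \<beta> :: real
  assumes damping_gt_1: "\<beta> > 1"
begin

definition damped_step :: "'a \<Rightarrow> 'a" where
  "damped_step x = u + (1 / \<beta>) *\<^sub>R g x"

definition orbit :: "nat \<Rightarrow> 'a" where
  "orbit n = (damped_step ^^ n) u"

lemma damped_step_interior: "x \<in> interior C \<Longrightarrow> damped_step x \<in> interior C"
  unfolding damped_step_def using damping_gt_1
  by (intro interior_add_mem[OF unit_interior] scaleR_mem g_mem) auto

lemma damped_step_iter_interior: "x \<in> interior C \<Longrightarrow> (damped_step ^^ n) x \<in> interior C"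
  by (induction n) (auto intro: damped_step_interior)

lemma orbit_interior: "orbit n \<in> interior C"
  unfolding orbit_def by (rule damped_step_iter_interior[OF unit_interior])

lemma orbit_Suc: "orbit (Suc n) = u + (1 / \<beta>) *\<^sub>R g (orbit n)"
  by (simp add: orbit_def damped_step_def)

lemma orbit_incseq: "orbit n \<preceq> orbit (Suc n)"
proof (induction n)
  case 0
  have "(1 / \<beta>) *\<^sub>R g u \<in> C"
    using damping_gt_1 by (intro scaleR_mem g_mem[OF unit_interior]) auto
  then show ?case by (simp add: orbit_def damped_step_def cle_def)
next
  case (Suc n)
  have "g (orbit n) \<preceq> g (orbit (Suc n))"
    using Suc by (intro g_mono orbit_interior)
  then show ?case
    unfolding orbit_Suc[of "Suc n"] orbit_Suc[of n] using damping_gt_1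
    by (intro cle_add_left cle_scaleR) auto
qed

lemma orbit_mono: "n \<le> m \<Longrightarrow> orbit n \<preceq> orbit m"
proof (induction m rule: dec_induct)
  case base
  show ?case by (rule cle_refl)
next
  case (step m)
  with orbit_incseq show ?case by (blast intro: cle_trans)
qed

lemma damped_step_iter_le:
  assumes y: "y \<in> interior C" "y \<preceq> c *\<^sub>R u" and c: "c \<ge> 1"
  shows "(damped_step ^^ Suc m) y \<preceq> u + (1 / (\<beta> - 1) + c / \<beta> ^ Suc m) *\<^sub>R (g ^^ Suc m) u"
proof (induction m)
  case 0
  have "g y \<preceq> g (c *\<^sub>R u)"
    using y c by (intro g_mono interior_scaleR_mem unit_interior) auto
  also have "\<dots> = c *\<^sub>R g u"
    using g_scaleR[OF unit_interior] c by simp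
  finally have "(1 / \<beta>) *\<^sub>R g y \<preceq> (c / \<beta>) *\<^sub>R g u"
    using cle_scaleR[of "g y" "c *\<^sub>R g u" "1 / \<beta>"] damping_gt_1 by simp
  also have "\<dots> \<preceq> (1 / (\<beta> - 1) + c / \<beta>) *\<^sub>R g u"
    using damping_gt_1 by (intro cle_scaleR_left g_mem[OF unit_interior]) auto
  finally show ?case
    by (simp add: damped_step_def cle_add_left)
next
  case (Suc m)
  define s where "s = 1 / (\<beta> - 1) + c / \<beta> ^ Suc m"
  define w where "w = (g ^^ Suc m) u"
  have s: "s \<ge> 0"
    using damping_gt_1 c by (simp add: s_def)
  have w: "w \<in> interior C"
    unfolding w_def by (rule g_iter_interior[OF unit_interior])
  have "(damped_step ^^ Suc m) y \<preceq> u + s *\<^sub>R w"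
    using Suc.IH by (simp add: s_def w_def)
  also have "\<dots> \<preceq> w + s *\<^sub>R w"
    unfolding w_def by (intro cle_add g_iter_ge[OF unit_interior] cle_refl)
  finally have "g ((damped_step ^^ Suc m) y) \<preceq> g ((1 + s) *\<^sub>R w)"
    using s w by (intro g_mono damped_step_iter_interior y interior_scaleR_mem) (auto simp: algebra_simps)
  also have "\<dots> = (1 + s) *\<^sub>R g w"
    using g_scaleR[OF w] s by simp
  finally have "(1 / \<beta>) *\<^sub>R g ((damped_step ^^ Suc m) y) \<preceq> (1 / \<beta>) *\<^sub>R ((1 + s) *\<^sub>R g w)"
    using damping_gt_1 by (intro cle_scaleR) auto
  moreover have "(damped_step ^^ Suc (Suc m)) y = u + (1 / \<beta>) *\<^sub>R g ((damped_step ^^ Suc m) y)"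
    by (simp add: damped_step_def)
  ultimately have "(damped_step ^^ Suc (Suc m)) y \<preceq> u + ((1 + s) / \<beta>) *\<^sub>R g w"
    by (metis cle_add_left scaleR_scaleR times_divide_eq_left mult_1)
  \<comment> \<open>\<open>1 / (\<beta> - 1)\<close> is the fixed point of \<open>s \<mapsto> (1 + s) / \<beta>\<close>.\<close>
  moreover have "(1 + s) / \<beta> = 1 / (\<beta> - 1) + c / \<beta> ^ Suc (Suc m)"
    using damping_gt_1 by (simp add: s_def field_simps)
  ultimately show ?case
    by (simp add: w_def)
qed

lemma damped_step_iter_invariant:
  assumes K: "K \<ge> 1" and t: "t > 0" "(g ^^ K) u \<preceq> t *\<^sub>R u" "t < \<beta> ^ K"
  obtains c where "c \<ge> 1" "\<And>y. y \<in> interior C \<Longrightarrow> y \<preceq> c *\<^sub>R u \<Longrightarrow> (damped_step ^^ K) y \<preceq> c *\<^sub>R u"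
proof -
  \<comment> \<open>\<open>c\<close> is the fixed point of \<open>c \<mapsto> 1 + (1 / (\<beta> - 1) + c / \<beta> ^ K) * t\<close>, a contraction as \<open>t < \<beta> ^ K\<close>.\<close>
  define q where "q = t / \<beta> ^ K"
  define c where "c = (1 + t / (\<beta> - 1)) / (1 - q)"
  have q: "q > 0" "q < 1"
    using t damping_gt_1 by (auto simp: q_def)
  have "t / (\<beta> - 1) > 0"
    using t damping_gt_1 by simp
  with q have "1 - q \<le> 1 + t / (\<beta> - 1)"
    by simp
  with q have c: "c \<ge> 1"
    by (simp add: c_def)
  have "c * (1 - q) = 1 + t / (\<beta> - 1)"
    using q by (simp add: c_def)
  then have c_fixed: "1 + (1 / (\<beta> - 1) + c / \<beta> ^ K) * t = c"
    by (simp add: q_def algebra_simps)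
  have "(damped_step ^^ K) y \<preceq> c *\<^sub>R u" if y: "y \<in> interior C" "y \<preceq> c *\<^sub>R u" for y
  proof -
    define s where "s = 1 / (\<beta> - 1) + c / \<beta> ^ K"
    have s: "s \<ge> 0"
      using damping_gt_1 c by (simp add: s_def)
    obtain m where m: "K = Suc m"
      using K by (cases K) auto
    have "(damped_step ^^ K) y \<preceq> u + s *\<^sub>R (g ^^ K) u"
      using damped_step_iter_le[OF y c] by (simp add: m s_def)
    also have "\<dots> \<preceq> u + s *\<^sub>R (t *\<^sub>R u)"
      using t s by (intro cle_add_left cle_scaleR)
    also have "\<dots> = (1 + s * t) *\<^sub>R u"
      by (simp add: scaleR_add_left)
    also have "\<dots> = c *\<^sub>R u"
      using c_fixed by (simp add: s_def)
    finally show ?thesis .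
  qed
  with c that show ?thesis by blast
qed

lemma orbit_bounded:
  assumes K: "K \<ge> 1" and "unorm_iter K < \<beta> ^ K"
  obtains c where "c \<ge> 1" "\<And>n. orbit n \<preceq> c *\<^sub>R u"
proof -
  define t where "t = (unorm_iter K + \<beta> ^ K) / 2"
  have t: "t > 0" "unorm_iter K < t" "t < \<beta> ^ K"
    using assms damping_gt_1 unorm_nonneg[OF g_iter_mem[OF unit_interior]]
    by (auto simp: t_def intro: add_nonneg_pos)
  then obtain c where c: "c \<ge> 1"
    and invariant: "\<And>y. y \<in> interior C \<Longrightarrow> y \<preceq> c *\<^sub>R u \<Longrightarrow> (damped_step ^^ K) y \<preceq> c *\<^sub>R u"
    using damped_step_iter_invariant[OF K t(1) cle_of_unorm_less[OF g_iter_mem[OF unit_interior] t(2)] t(3)]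
    by blast
  have multiple: "orbit (n * K) \<preceq> c *\<^sub>R u" for n
  proof (induction n)
    case 0
    show ?case using c unit_mem cle_scaleR_left[of u 1 c] by (simp add: orbit_def)
  next
    case (Suc n)
    have "orbit (Suc n * K) = (damped_step ^^ K) (orbit (n * K))"
      by (simp add: orbit_def funpow_add add.commute)
    with invariant[OF orbit_interior Suc.IH] show ?case by simp
  qed
  have "orbit n \<preceq> c *\<^sub>R u" for n
  proof -
    have "n mod K < K"
      using K by simp
    then have "n \<le> Suc (n div K) * K"
      unfolding mult_Suc using div_mult_mod_eq[of n K] by linarith
    with multiple show ?thesis by (blast intro: orbit_mono cle_trans)
  qed
  with c that show ?thesis by blast
qed

lemma orbit_Suc_Suc_le:
  assumes \<mu>: "\<mu> > 0" and ratio: "orbit (Suc n) \<preceq> \<mu> *\<^sub>R orbit n"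
  shows "orbit (Suc (Suc n)) \<preceq> u + \<mu> *\<^sub>R (orbit (Suc n) - u)"
proof -
  have "g (orbit (Suc n)) \<preceq> g (\<mu> *\<^sub>R orbit n)"
    using ratio \<mu> by (intro g_mono orbit_interior interior_scaleR_mem)
  also have "\<dots> = \<mu> *\<^sub>R g (orbit n)"
    using g_scaleR[OF orbit_interior] \<mu> by simp
  finally have "(1 / \<beta>) *\<^sub>R g (orbit (Suc n)) \<preceq> (1 / \<beta>) *\<^sub>R (\<mu> *\<^sub>R g (orbit n))"
    using damping_gt_1 by (intro cle_scaleR) auto
  also have "\<dots> = \<mu> *\<^sub>R (orbit (Suc n) - u)"
    by (simp add: orbit_Suc[of n])
  finally show ?thesis
    by (simp add: orbit_Suc[of "Suc n"] cle_add_left)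
qed

lemma orbit_ratio_bound:
  assumes c: "c \<ge> 1" and bounded: "\<And>n. orbit n \<preceq> c *\<^sub>R u"
  obtains L where "L > 0" "\<And>n. orbit (Suc n) \<preceq> (1 + L * (1 - 1 / c) ^ n) *\<^sub>R orbit n"
proof -
  obtain A where A: "A > 0" "g u \<preceq> A *\<^sub>R u"
    using interior_absorbing[OF unit_interior] by blast
  define L where "L = A / \<beta>"
  define \<theta> where "\<theta> = 1 - 1 / c"
  have L: "L > 0"
    using A damping_gt_1 by (simp add: L_def)
  have \<theta>: "\<theta> \<ge> 0"
    using c by (simp add: \<theta>_def)
  \<comment> \<open>Since \<open>x\<^sub>n\<^sub>+\<^sub>1 \<preceq> c u\<close>, a ratio bound \<open>\<mu>\<close> for one step yields the ratio bound
    \<open>\<mu> - (\<mu> - 1) / c = 1 + (\<mu> - 1) \<theta>\<close> for the next one.\<close>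
  have "orbit (Suc n) \<preceq> (1 + L * \<theta> ^ n) *\<^sub>R orbit n" for n
  proof (induction n)
    case 0
    have "(1 / \<beta>) *\<^sub>R g u \<preceq> (1 / \<beta>) *\<^sub>R (A *\<^sub>R u)"
      using A damping_gt_1 by (intro cle_scaleR) auto
    then have "orbit (Suc 0) \<preceq> u + (1 / \<beta>) *\<^sub>R (A *\<^sub>R u)"
      unfolding orbit_Suc by (simp add: orbit_def cle_add_left)
    also have "\<dots> = (1 + L * \<theta> ^ 0) *\<^sub>R orbit 0"
      by (simp add: orbit_def L_def algebra_simps)
    finally show ?case .
  next
    case (Suc n)
    define \<mu> where "\<mu> = 1 + L * \<theta> ^ n"
    have \<mu>: "\<mu> \<ge> 1"
      using L \<theta> by (simp add: \<mu>_def)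
    have "orbit (Suc (Suc n)) \<preceq> u + \<mu> *\<^sub>R (orbit (Suc n) - u)"
      using \<mu> Suc.IH unfolding \<mu>_def by (intro orbit_Suc_Suc_le) auto
    also have "\<dots> \<preceq> (1 + L * \<theta> ^ Suc n) *\<^sub>R orbit (Suc n)"
    proof -
      have next_coefficient: "1 + L * \<theta> ^ Suc n = \<mu> - L * \<theta> ^ n / c"
        using c by (simp add: \<mu>_def \<theta>_def field_simps)
      have "(1 + L * \<theta> ^ Suc n) *\<^sub>R orbit (Suc n) - (u + \<mu> *\<^sub>R (orbit (Suc n) - u))
          = (L * \<theta> ^ n / c) *\<^sub>R (c *\<^sub>R u - orbit (Suc n))"
        unfolding next_coefficient using c by (simp add: \<mu>_def algebra_simps)
      moreover have "(L * \<theta> ^ n / c) *\<^sub>R (c *\<^sub>R u - orbit (Suc n)) \<in> C"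
        using bounded L \<theta> c by (intro scaleR_mem) (auto simp: cle_def)
      ultimately show ?thesis
        by (simp add: cle_def)
    qed
    finally show ?case .
  qed
  with L that show ?thesis by (simp add: \<theta>_def)
qed

lemma f_orbit_le:
  assumes "orbit (Suc n) \<preceq> \<mu> *\<^sub>R orbit n"
  shows "f (orbit n) \<preceq> (\<beta> * \<mu> - 1) *\<^sub>R orbit n"
proof -
  have "(\<beta> * \<mu> - 1) *\<^sub>R orbit n - f (orbit n) = \<beta> *\<^sub>R (\<mu> *\<^sub>R orbit n - orbit (Suc n)) + \<beta> *\<^sub>R u"
    using damping_gt_1 by (simp add: orbit_Suc algebra_simps)
  also have "\<dots> \<in> C"
    using assms damping_gt_1 by (intro add_mem scaleR_mem unit_mem) (auto simp: cle_def)
  finally show ?thesis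
    by (simp add: cle_def)
qed

end

lemma (in cone_map) spectral_radius_le_of_unorm_iter:
  assumes \<beta>: "\<beta> > 1" and K: "K \<ge> 1" and "unorm_iter K < \<beta> ^ K"
  shows "r \<le> \<beta> - 1"
proof -
  interpret damped_orbit C u f \<beta>
    using \<beta> by unfold_locales
  obtain c where c: "c \<ge> 1" "\<And>n. orbit n \<preceq> c *\<^sub>R u"
    using orbit_bounded[OF K assms(3)] by blast
  obtain L where L: "L > 0" "\<And>n. orbit (Suc n) \<preceq> (1 + L * (1 - 1 / c) ^ n) *\<^sub>R orbit n"
    using orbit_ratio_bound[OF c] by blast
  have "r \<le> \<beta> * (1 + L * (1 - 1 / c) ^ n) - 1" for n
  proof (rule spectral_radius_le[OF orbit_interior _ f_orbit_le[OF L(2)]])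
    have "\<beta> \<le> \<beta> * (1 + L * (1 - 1 / c) ^ n)"
      using \<beta> L c by simp
    with \<beta> show "\<beta> * (1 + L * (1 - 1 / c) ^ n) - 1 > 0"
      by linarith
  qed
  moreover have "(\<lambda>n. \<beta> * (1 + L * (1 - 1 / c) ^ n) - 1) \<longlonglongrightarrow> \<beta> * (1 + L * 0) - 1"
    using c by (intro tendsto_intros LIMSEQ_power_zero) auto
  ultimately show ?thesis
    by (intro LIMSEQ_le_const) auto
qed

section \<open>Growth rate of the iterates of \<open>f + id\<close>\<close>

context cone_map
begin

lemma unorm_iter_ge_1: "unorm_iter k \<ge> 1"
  by (rule unorm_ge_one[OF g_iter_mem g_iter_ge]) (use unit_interior in auto)

lemma spectral_radius_le_root_unorm_iter:
  assumes k: "k > 0"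
  shows "r + 1 \<le> unorm_iter k powr (1 / real k)"
proof (rule dense_ge)
  fix \<beta> assume \<beta>: "unorm_iter k powr (1 / real k) < \<beta>"
  have "1 \<le> unorm_iter k powr (1 / real k)"
    using unorm_iter_ge_1 k by (simp add: ge_one_powr_ge_zero)
  with \<beta> have "\<beta> > 1" by simp
  have "unorm_iter k = (unorm_iter k powr (1 / real k)) ^ k"
    using unorm_iter_ge_1[of k] k by (intro power_powr_inverse[symmetric]) auto
  also have "\<dots> < \<beta> ^ k"
    using \<beta> k by (intro power_strict_mono) auto
  finally have "r \<le> \<beta> - 1"
    using \<open>\<beta> > 1\<close> k by (intro spectral_radius_le_of_unorm_iter) auto
  then show "r + 1 \<le> \<beta>" by simp
qed

lemma eventually_root_unorm_iter_less:
  assumes "\<epsilon> > 0"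
  shows "eventually (\<lambda>k. unorm_iter k powr (1 / real k) < r + 1 + \<epsilon>) sequentially"
proof -
  obtain x \<gamma> where x: "x \<in> interior C" "\<gamma> > 0" "\<gamma> < r + \<epsilon>" "f x \<preceq> \<gamma> *\<^sub>R x"
    using spectral_radius_approx[OF assms] by blast
  obtain D where D: "D > 0" "\<And>k. unorm_iter k \<le> D * (\<gamma> + 1) ^ k"
    using unorm_iter_le_of_subeigenvector[OF x(1,2,4)] by blast
  have root_bound: "unorm_iter k powr (1 / real k) \<le> D powr (1 / real k) * (\<gamma> + 1)" if "k > 0" for k
  proof -
    have "unorm_iter k powr (1 / real k) \<le> (D * (\<gamma> + 1) ^ k) powr (1 / real k)"
      using D unorm_iter_ge_1[of k] by (intro powr_mono2) auto
    also have "\<dots> = D powr (1 / real k) * (\<gamma> + 1)"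
      using D x that by (simp add: powr_mult powr_inverse_power)
    finally show ?thesis .
  qed
  have "(\<lambda>k. D powr (1 / real k) * (\<gamma> + 1)) \<longlonglongrightarrow> 1 * (\<gamma> + 1)"
    using D by (intro tendsto_mult tendsto_const_powr_inverse tendsto_const)
  moreover have "\<gamma> + 1 < r + 1 + \<epsilon>"
    using x by simp
  ultimately have "eventually (\<lambda>k. D powr (1 / real k) * (\<gamma> + 1) < r + 1 + \<epsilon>) sequentially"
    by (simp add: order_tendstoD(2))
  moreover have "eventually (\<lambda>k. k > 0) sequentially"
    by (rule eventually_gt_at_top)
  ultimately show ?thesis
    by eventually_elim (use root_bound in \<open>auto intro: le_less_trans\<close>)
qed

lemma tendsto_root_unorm_iter: "(\<lambda>k. unorm_iter k powr (1 / real k)) \<longlonglongrightarrow> r + 1"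
proof (rule order_tendstoI)
  fix a assume "a < r + 1"
  show "eventually (\<lambda>k. a < unorm_iter k powr (1 / real k)) sequentially"
    using eventually_gt_at_top[of 0]
  proof (rule eventually_mono)
    fix k :: nat assume "k > 0"
    with spectral_radius_le_root_unorm_iter[of k] \<open>a < r + 1\<close>
    show "a < unorm_iter k powr (1 / real k)" by linarith
  qed
next
  fix b assume "b > r + 1"
  with eventually_root_unorm_iter_less[of "b - (r + 1)"]
  show "eventually (\<lambda>k. unorm_iter k powr (1 / real k) < b) sequentially"
    by simp
qed

lemma Inf_root_unorm_iter: "Inf {unorm_iter k powr (1 / real k) | k. k > 0} = r + 1"
proof (rule antisym)
  let ?S = "{unorm_iter k powr (1 / real k) | k. k > 0}"
  show "r + 1 \<le> Inf ?S"
    using spectral_radius_le_root_unorm_iter by (intro cInf_greatest) auto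
  show "Inf ?S \<le> r + 1"
  proof (rule field_le_epsilon)
    fix \<epsilon> :: real assume "\<epsilon> > 0"
    then obtain N where N: "\<And>k. k \<ge> N \<Longrightarrow> unorm_iter k powr (1 / real k) < r + 1 + \<epsilon>"
      using eventually_root_unorm_iter_less unfolding eventually_sequentially by blast
    have "unorm_iter (Suc N) powr (1 / real (Suc N)) < r + 1 + \<epsilon>"
      by (rule N) simp
    then obtain k where k: "k > 0" "unorm_iter k powr (1 / real k) < r + 1 + \<epsilon>"
      by blast
    have "Inf ?S \<le> unorm_iter k powr (1 / real k)"
      using k by (intro cInf_lower) (auto intro: bdd_belowI[of _ 0])
    with k show "Inf ?S \<le> r + 1 + \<epsilon>" by simp
  qed
qed

lemma tendsto_root_norm_iter:
  assumes "normal_cone C"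
  shows "(\<lambda>k. norm ((g ^^ k) u) powr (1 / real k)) \<longlonglongrightarrow> r + 1"
proof -
  obtain \<delta> K where \<delta>: "\<delta> > 0" and K: "K > 0"
    and lower: "\<And>y. y \<in> C \<Longrightarrow> \<delta> * unorm C u y \<le> norm y"
    and upper: "\<And>y. y \<in> C \<Longrightarrow> norm y \<le> K * unorm C u y"
    using unorm_norm_equivalent[OF assms] by blast
  have "unorm_iter k \<ge> 0" for k
    using unorm_iter_ge_1[of k] by linarith
  with lower[OF g_iter_mem] upper[OF g_iter_mem] unit_interior show ?thesis
    by (intro tendsto_powr_inverse_comparable[OF tendsto_root_unorm_iter \<delta> K])
qed

lemma spectral_radius_less_1_iff: "r < 1 \<longleftrightarrow> (\<exists>k. cll C ((g ^^ k) u) ((2::real) ^ k *\<^sub>R u))"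
proof
  assume "r < 1"
  then obtain N where N: "\<And>k. k \<ge> N \<Longrightarrow> unorm_iter k powr (1 / real k) < 2"
    using eventually_root_unorm_iter_less[of "1 - r"] unfolding eventually_sequentially by auto
  have "unorm_iter (Suc N) powr (1 / real (Suc N)) < 2"
    by (rule N) simp
  then obtain k where k: "k > 0" "unorm_iter k powr (1 / real k) < 2"
    by blast
  have "unorm_iter k = (unorm_iter k powr (1 / real k)) ^ k"
    using unorm_iter_ge_1[of k] k by (intro power_powr_inverse[symmetric]) auto
  also have "\<dots> < 2 ^ k"
    using k by (intro power_strict_mono) auto
  finally obtain t where t: "unorm_iter k < t" "t < 2 ^ k"
    using dense by blast
  then have "(2 ^ k - t) *\<^sub>R u + (t *\<^sub>R u - (g ^^ k) u) \<in> interior C"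
    using cle_of_unorm_less[OF g_iter_mem[OF unit_interior] t(1)]
    by (intro interior_add_mem interior_scaleR_mem unit_interior) (auto simp: cle_def)
  then show "\<exists>k. cll C ((g ^^ k) u) ((2::real) ^ k *\<^sub>R u)"
    by (auto simp: cll_def algebra_simps)
next
  assume "\<exists>k. cll C ((g ^^ k) u) ((2::real) ^ k *\<^sub>R u)"
  then obtain k where int: "2 ^ k *\<^sub>R u - (g ^^ k) u \<in> interior C"
    by (auto simp: cll_def)
  then have k: "k > 0"
    using zero_notin_interior by (cases k) auto
  obtain \<epsilon> where \<epsilon>: "\<epsilon> > 0" "\<epsilon> < 1" "\<epsilon> *\<^sub>R u \<preceq> 2 ^ k *\<^sub>R u - (g ^^ k) u"
    using interior_unit_margin[OF int] by blast
  then have "(g ^^ k) u \<preceq> (2 ^ k - \<epsilon>) *\<^sub>R u"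
    by (simp add: cle_def algebra_simps)
  moreover have "(2::real) ^ k - \<epsilon> > 0"
    using \<epsilon> one_le_power[of "2::real" k] by linarith
  ultimately have "unorm_iter k \<le> 2 ^ k - \<epsilon>"
    by (intro unorm_le g_iter_mem unit_interior)
  with \<epsilon> have "unorm_iter k < 2 ^ k"
    by simp
  then have "unorm_iter k powr (1 / real k) < (2 ^ k) powr (1 / real k)"
    using unorm_iter_ge_1[of k] k by (intro powr_less_mono2) auto
  with spectral_radius_le_root_unorm_iter[OF k] k show "r < 1"
    by (simp add: powr_inverse_power)
qed

end

theorem proposition4p10:
  fixes C :: "'a::banach set" and u :: 'a and f :: "'a \<Rightarrow> 'a"
  assumes nontriv: "(UNIV :: 'a set) \<noteq> {0}"
    and cone: "closed_cone C" and normal: "normal_cone C"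
    and int_ne: "interior C \<noteq> {}"
    and u: "u \<in> interior C"
    and fmaps: "\<forall>x\<in>interior C. f x \<in> C"
    and mono: "order_preserving_on C (interior C) f"
    and hom: "homogeneous_on (interior C) f"
  shows "((\<lambda>k. unorm C u (((\<lambda>x. f x + x) ^^ k) u) powr (1 / real k) - 1)
            \<longlonglongrightarrow> cone_spectral_radius C f)
    \<and> cone_spectral_radius C f
        = Inf {unorm C u (((\<lambda>x. f x + x) ^^ k) u) powr (1 / real k) | k::nat. k > 0} - 1
    \<and> ((\<lambda>k. norm (((\<lambda>x. f x + x) ^^ k) u) powr (1 / real k) - 1)
            \<longlonglongrightarrow> cone_spectral_radius C f)
    \<and> (cone_spectral_radius C f < 1 \<longleftrightarrow>
        (\<exists>k::nat. cll C (((\<lambda>x. f x + x) ^^ k) u) ((2::real) ^ k *\<^sub>R u)))"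
proof -
  interpret cone_map C u f
    using cone nontriv u fmaps mono hom by unfold_locales
  show ?thesis
    using tendsto_diff[OF tendsto_root_unorm_iter tendsto_const[of 1]]
      tendsto_diff[OF tendsto_root_norm_iter[OF normal] tendsto_const[of 1]]
      Inf_root_unorm_iter spectral_radius_less_1_iff
    by simp
qed

end
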